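(* Let $X$ be a Banach space, $k\in\mathbb{N}$, and $(x_s)_{s\in[\mathbb{N}]^k}$ a bounded $k$-sequence in $X$. Let $M\subseteq\mathbb{N}$ be infinite such that $(x_s)_{s\in[M]^k}$ generates a $k$-spreading model $(e_n)_n$ which is Cesàro summable to zero, i.e. $\|\frac1n\sum_{i=1}^n e_i\|_*\to0$. Then for every infinite $L\subseteq M$, $(x_s)_{s\in[L]^k}$ is $k$-Cesàro summable to $0$.
   Context: $[M]^k$: $k$-subsets of $M\subseteq\mathbb{N}$ (increasing enumerations, $M(l)$ the $l$-th element); $M|n=\{M(1),\dots,M(n)\}$. Plegma family: $(s_j)_{j=1}^l$ in $[M]^k$ with $s_1(i)<\dots<s_l(i)$ ($i\le k$), $s_l(i)<s_1(i+1)$ ($i<k$). $(x_s)_{s\in[M]^k}$ generates the Hamel basis $(e_n)$ of a seminormed space $(E,\|\cdot\|_* )$ as a $k$-spreading model if for a null sequence $\delta_l>0$: $|\|\sum_{j=1}^m a_jx_{s_j}\|-\|\sum_{j=1}^m a_je_j\|_*|\le\delta_l$ for all $m\le l$, plegma $(s_j)_{j=1}^m$ in $[M]^k$ with $s_1(1)\ge M(l)$, $a_j\in[-1,1]$. $(x_s)_{s\in[L]^k}$ is $k$-Cesàro summable to $x_0\in X$ if $\binom{n}{k}^{-1}\sum_{s\in[L|n]^k}x_s\to x_0$ in norm as $n\to\infty$. *)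

theory Defs
  imports "HOL-Analysis.Analysis"
begin

text \<open>[M]^k: the k-element subsets of M (identified with increasing enumerations).\<close>
definition ksubsets :: "nat set \<Rightarrow> nat \<Rightarrow> nat set set" where
  "ksubsets M k = {s. s \<subseteq> M \<and> finite s \<and> card s = k}"

text \<open>s(i): the i-th element (1-indexed) of a finite set s in increasing order.\<close>
definition elt :: "nat set \<Rightarrow> nat \<Rightarrow> nat" where
  "elt s i = sorted_list_of_set s ! (i - 1)"

text \<open>M(l): the l-th element (1-indexed) of an infinite set M.\<close>
definition nth_el :: "nat set \<Rightarrow> nat \<Rightarrow> nat" where
  "nth_el M l = enumerate M (l - 1)"

definition restr :: "nat set \<Rightarrow> nat \<Rightarrow> nat set" where
  "restr M n = nth_el M ` {1..n}"

definition plegma :: "nat \<Rightarrow> (nat \<Rightarrow> nat set) \<Rightarrow> nat \<Rightarrow> bool" where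
  "plegma k ss l \<longleftrightarrow>
     (\<forall>i\<in>{1..k}. \<forall>j\<in>{1..<l}. elt (ss j) i < elt (ss (Suc j)) i) \<and>
     (\<forall>i\<in>{1..<k}. elt (ss l) i < elt (ss 1) (Suc i))"

text \<open>The seminormed space (E, norm_* ) with Hamel basis (e_n)_{n\<ge>1} is represented by the
  finitely supported real sequences a with a 0 = 0 (a = \<Sum> a_n e_n), with a seminorm nrm.\<close>
definition fin_coeffs :: "(nat \<Rightarrow> real) set" where
  "fin_coeffs = {a. finite {n. a n \<noteq> 0} \<and> a 0 = 0}"

definition is_seminorm_on_coeffs :: "((nat \<Rightarrow> real) \<Rightarrow> real) \<Rightarrow> bool" where
  "is_seminorm_on_coeffs nrm \<longleftrightarrow>
     (\<forall>a\<in>fin_coeffs. nrm a \<ge> 0) \<and>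
     (\<forall>a\<in>fin_coeffs. \<forall>c. nrm (\<lambda>n. c * a n) = \<bar>c\<bar> * nrm a) \<and>
     (\<forall>a\<in>fin_coeffs. \<forall>b\<in>fin_coeffs. nrm (\<lambda>n. a n + b n) \<le> nrm a + nrm b)"

definition sm_coeffs :: "nat \<Rightarrow> (nat \<Rightarrow> real) \<Rightarrow> nat \<Rightarrow> real" where
  "sm_coeffs m a = (\<lambda>n. if n \<in> {1..m} then a n else 0)"

definition generates_spreading_model ::
  "(nat set \<Rightarrow> 'a::real_normed_vector) \<Rightarrow> nat set \<Rightarrow> nat \<Rightarrow> ((nat \<Rightarrow> real) \<Rightarrow> real) \<Rightarrow> bool" where
  "generates_spreading_model x M k nrm \<longleftrightarrow>
     (\<exists>\<delta>::nat \<Rightarrow> real. (\<forall>l. \<delta> l > 0) \<and> \<delta> \<longlonglongrightarrow> 0 \<and>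
       (\<forall>l m ss a. 1 \<le> m \<and> m \<le> l \<and> (\<forall>j\<in>{1..m}. ss j \<in> ksubsets M k) \<and> plegma k ss m \<and>
          elt (ss 1) 1 \<ge> nth_el M l \<and> (\<forall>j\<in>{1..m}. \<bar>a j\<bar> \<le> 1) \<longrightarrow>
          \<bar>norm (\<Sum>j=1..m. a j *\<^sub>R x (ss j)) - nrm (sm_coeffs m a)\<bar> \<le> \<delta> l))"

definition k_cesaro_summable ::
  "(nat set \<Rightarrow> 'a::real_normed_vector) \<Rightarrow> nat set \<Rightarrow> nat \<Rightarrow> 'a \<Rightarrow> bool" where
  "k_cesaro_summable x L k x0 \<longleftrightarrow>
     (\<lambda>n. (1 / real (n choose k)) *\<^sub>R (\<Sum>s\<in>ksubsets (restr L n) k. x s)) \<longlonglongrightarrow> x0"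

end

theory Submission
  imports Defs "HOL-Real_Asymp.Real_Asymp"
begin

(* Transport everything to \<nat> along the enumeration f of L: with Y u = x (f ` u) the
   k-Cesaro means of (x_s)_{s \<in> [L]^k} are the averages of Y over the k-subsets of {0..<n}.
   Averaging Y over the m translates u, u+1, ..., u+m-1 of each k-set u changes the total sum
   over [{0..<n}]^k only by O(m^2 C(n-1,k-1)) (translation moves only few k-sets out of
   {0..<n}).  A k-set u is "well spread" if min u \<ge> l and its consecutive gaps are \<ge> m;
   then the translates of u, mapped by f, form a plegma family in [M]^k, so the spreading
   model bounds the norm of their average by \<parallel>(e_1+...+e_m)/m\<parallel>_* + \<delta>_l, which is small
   for large m and l.  The remaining k-sets number O((l + m k) k/n \<cdot> C(n,k)). *)

section \<open>The i-th element of a finite set\<close>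

lemma sorted_list_of_set_strict_mono_image:
  fixes g :: "nat \<Rightarrow> nat"
  assumes "strict_mono g" "finite u"
  shows "sorted_list_of_set (g ` u) = map g (sorted_list_of_set u)"
proof -
  have "sorted_wrt (\<lambda>a b. g a < g b) (sorted_list_of_set u)"
    by (rule sorted_wrt_mono_rel[OF _ strict_sorted_list_of_set])
      (use assms(1) in \<open>simp add: strict_mono_def\<close>)
  hence "sorted_wrt (<) (map g (sorted_list_of_set u))" by (simp add: sorted_wrt_map)
  moreover have "set (map g (sorted_list_of_set u)) = set (sorted_list_of_set (g ` u))"
    using assms(2) by simp
  ultimately show ?thesis by (metis strict_sorted_equal strict_sorted_list_of_set)
qed

lemma elt_strict_mono_image:
  fixes g :: "nat \<Rightarrow> nat"
  assumes "strict_mono g" "finite u" "1 \<le> i" "i \<le> card u"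
  shows "elt (g ` u) i = g (elt u i)"
  using assms by (simp add: elt_def sorted_list_of_set_strict_mono_image)

lemma elt_in:
  assumes "finite u" "1 \<le> i" "i \<le> card u"
  shows "elt u i \<in> u"
proof -
  have "sorted_list_of_set u ! (i - 1) \<in> set (sorted_list_of_set u)"
    using assms by (intro nth_mem) auto
  thus ?thesis using assms by (simp add: elt_def)
qed

lemma elt_less:
  assumes "finite u" "1 \<le> i" "i < card u"
  shows "elt u i < elt u (Suc i)"
proof -
  have "sorted_wrt (<) (sorted_list_of_set u)" by simp
  hence "sorted_list_of_set u ! (i - 1) < sorted_list_of_set u ! i"
    using assms by (subst (asm) sorted_wrt_iff_nth_less) auto
  thus ?thesis using assms by (simp add: elt_def)
qed

section \<open>Counting k-subsets\<close>

lemma ksubsets_image: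
  assumes "inj_on g A"
  shows "image g ` ksubsets A k = ksubsets (g ` A) k"
proof
  show "image g ` ksubsets A k \<subseteq> ksubsets (g ` A) k"
    using assms by (auto simp: ksubsets_def card_image inj_on_subset)
next
  show "ksubsets (g ` A) k \<subseteq> image g ` ksubsets A k"
  proof
    fix v assume v: "v \<in> ksubsets (g ` A) k"
    then obtain w where w: "w \<subseteq> A" "v = g ` w" by (auto simp: ksubsets_def subset_image_iff)
    have "inj_on g w" using assms w(1) by (rule inj_on_subset)
    thus "v \<in> image g ` ksubsets A k"
      using v w by (auto simp: ksubsets_def finite_image_iff card_image)
  qed
qed

lemma finite_ksubsets: "finite A \<Longrightarrow> finite (ksubsets A k)"
  unfolding ksubsets_def by (rule finite_subset[of _ "Pow A"]) auto

lemma card_ksubsets: "finite A \<Longrightarrow> card (ksubsets A k) = card A choose k"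
proof -
  assume A: "finite A"
  hence "ksubsets A k = {B. B \<subseteq> A \<and> card B = k}"
    by (auto simp: ksubsets_def intro: finite_subset)
  thus ?thesis using n_subsets[OF A] by simp
qed

lemma card_ksubsets_containing:
  assumes "finite A"
  shows "card {u\<in>ksubsets A k. a \<in> u} \<le> (card A - 1) choose (k - 1)"
proof (cases "a \<in> A \<and> k \<ge> 1")
  case True
  have "{u\<in>ksubsets A k. a \<in> u} \<subseteq> insert a ` ksubsets (A - {a}) (k - 1)"
  proof
    fix u assume u: "u \<in> {u\<in>ksubsets A k. a \<in> u}"
    hence "u - {a} \<in> ksubsets (A - {a}) (k - 1)" and "u = insert a (u - {a})"
      by (auto simp: ksubsets_def)
    thus "u \<in> insert a ` ksubsets (A - {a}) (k - 1)" by blast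
  qed
  hence "card {u\<in>ksubsets A k. a \<in> u} \<le> card (insert a ` ksubsets (A - {a}) (k - 1))"
    using assms by (intro card_mono finite_imageI finite_ksubsets) auto
  also have "\<dots> \<le> card (ksubsets (A - {a}) (k - 1))"
    by (rule card_image_le) (simp add: finite_ksubsets assms)
  also have "\<dots> = (card A - 1) choose (k - 1)" using assms True by (simp add: card_ksubsets)
  finally show ?thesis .
next
  case False
  hence "{u\<in>ksubsets A k. a \<in> u} = {}" by (auto simp: ksubsets_def Suc_le_eq card_gt_0_iff)
  thus ?thesis by (simp only: card.empty le0)
qed

lemma card_ksubsets_containing_two:
  assumes "finite A" "a \<noteq> b" "k \<ge> 2"
  shows "card {u\<in>ksubsets A k. a \<in> u \<and> b \<in> u} \<le> (card A - 2) choose (k - 2)"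
proof (cases "a \<in> A")
  case True
  have "{u\<in>ksubsets A k. a \<in> u \<and> b \<in> u} \<subseteq> insert a ` {v\<in>ksubsets (A - {a}) (k - 1). b \<in> v}"
  proof
    fix u assume u: "u \<in> {u\<in>ksubsets A k. a \<in> u \<and> b \<in> u}"
    hence "u - {a} \<in> {v\<in>ksubsets (A - {a}) (k - 1). b \<in> v}" and "u = insert a (u - {a})"
      using assms by (auto simp: ksubsets_def)
    thus "u \<in> insert a ` {v\<in>ksubsets (A - {a}) (k - 1). b \<in> v}" by blast
  qed
  hence "card {u\<in>ksubsets A k. a \<in> u \<and> b \<in> u}
      \<le> card (insert a ` {v\<in>ksubsets (A - {a}) (k - 1). b \<in> v})"
    using assms by (intro card_mono finite_imageI) (auto simp: finite_ksubsets)
  also have "\<dots> \<le> card {v\<in>ksubsets (A - {a}) (k - 1). b \<in> v}"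
    by (rule card_image_le) (simp add: finite_ksubsets assms)
  also have "\<dots> \<le> (card (A - {a}) - 1) choose (k - 1 - 1)"
    using assms by (intro card_ksubsets_containing) auto
  also have "\<dots> = (card A - 2) choose (k - 2)"
    using True assms by (simp add: card_Diff_singleton numeral_2_eq_2)
  finally show ?thesis .
next
  case False
  hence "{u\<in>ksubsets A k. a \<in> u \<and> b \<in> u} = {}" by (auto simp: ksubsets_def)
  thus ?thesis by (simp only: card.empty le0)
qed

lemma card_ksubsets_meeting:
  assumes "finite A" "finite D"
  shows "card {u\<in>ksubsets A k. u \<inter> D \<noteq> {}} \<le> card D * ((card A - 1) choose (k - 1))"
proof -
  have "card {u\<in>ksubsets A k. u \<inter> D \<noteq> {}} \<le> card (\<Union>a\<in>D. {u\<in>ksubsets A k. a \<in> u})"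
    using assms by (intro card_mono) (auto simp: finite_ksubsets)
  also have "\<dots> \<le> (\<Sum>a\<in>D. card {u\<in>ksubsets A k. a \<in> u})" by (rule card_UN_le) (rule assms)
  also have "\<dots> \<le> (\<Sum>a\<in>D. (card A - 1) choose (k - 1))"
    by (intro sum_mono card_ksubsets_containing assms)
  finally show ?thesis by simp
qed

lemma choose_pred_ratio:
  assumes "k \<ge> 1" "n \<ge> 1"
  shows "real ((n - 1) choose (k - 1)) = real k / real n * real (n choose k)"
proof -
  have "real k * real (n choose k) = real n * real ((n - 1) choose (k - 1))"
    using times_binomial_minus1_eq[of k n] assms by (metis of_nat_mult less_le_trans zero_less_one)
  thus ?thesis using assms by (simp add: field_simps)
qed

lemma choose_pred2_ratio:
  assumes "k \<ge> 2" "n \<ge> 2"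
  shows "real ((n - 2) choose (k - 2))
       = real k * (real k - 1) / (real n * (real n - 1)) * real (n choose k)"
proof -
  have "real ((n - 1 - 1) choose (k - 1 - 1)) = real (k - 1) / real (n - 1) * real ((n - 1) choose (k - 1))"
    using assms by (intro choose_pred_ratio) auto
  also have "\<dots> = (real k - 1) / (real n - 1) * (real k / real n * real (n choose k))"
    using assms choose_pred_ratio[of k n] by simp
  finally show ?thesis by (simp add: numeral_2_eq_2 mult_ac)
qed

lemma card_ksubsets_containing_two_real:
  assumes "finite A" "a \<noteq> b" "card A \<ge> 2"
  shows "real (card {u\<in>ksubsets A k. a \<in> u \<and> b \<in> u})
       \<le> real k * (real k - 1) / (real (card A) * (real (card A) - 1)) * real (card A choose k)"
proof (cases "k \<ge> 2")
  case True
  thus ?thesis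
    using card_ksubsets_containing_two[OF assms(1,2) True] choose_pred2_ratio[OF True assms(3)]
    by (metis of_nat_le_iff)
next
  case False
  have "2 \<le> card u" if "finite u" "a \<in> u" "b \<in> u" for u
    using card_mono[of u "{a, b}"] that assms(2) by auto
  hence "{u\<in>ksubsets A k. a \<in> u \<and> b \<in> u} = {}" using False by (auto simp: ksubsets_def)
  moreover have "real k * (real k - 1) = 0" using False by (cases k) auto
  ultimately show ?thesis by (simp only: card.empty of_nat_0 div_0 mult_zero_left order_refl)
qed

section \<open>Averaging over translates of k-sets\<close>

abbreviation shift :: "nat \<Rightarrow> nat set \<Rightarrow> nat set" where
  "shift t u \<equiv> (\<lambda>a. a + t) ` u"

text \<open>Translating all k-subsets of {0..<n} by t changes the sum of a function bounded by Cb
  by at most 2 t Cb C(n-1,k-1): only the k-sets meeting {0..<t} resp. {n..<n+t} differ.\<close>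
lemma shift_sum_defect:
  fixes Y :: "nat set \<Rightarrow> 'a::real_normed_vector"
  assumes Yb: "\<And>u. finite u \<Longrightarrow> card u = k \<Longrightarrow> norm (Y u) \<le> Cb" and Cb0: "Cb \<ge> 0"
  shows "norm ((\<Sum>u\<in>ksubsets {0..<n} k. Y u) - (\<Sum>u\<in>ksubsets {0..<n} k. Y (shift t u)))
          \<le> Cb * (2 * real t * real ((n - 1) choose (k - 1)))"
proof -
  define S where "S = ksubsets {0..<n} k"
  define S0 where "S0 = ksubsets {t..<n} k"
  define S' where "S' = ksubsets {t..<n+t} k"
  have fin: "finite S" "finite S'" by (auto simp: S_def S'_def finite_ksubsets)
  have sub: "S0 \<subseteq> S" "S0 \<subseteq> S'" by (auto simp: S_def S'_def S0_def ksubsets_def)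
  have "(\<Sum>u\<in>S. Y (shift t u)) = (\<Sum>v\<in>shift t ` S. Y v)"
    by (rule sum.reindex[symmetric, unfolded comp_def], rule inj_on_image,
        rule inj_on_subset[of _ UNIV]) (auto simp: inj_on_def)
  also have "shift t ` S = S'"
    unfolding S_def S'_def by (subst ksubsets_image) (auto simp: inj_on_def)
  finally have "(\<Sum>u\<in>S. Y u) - (\<Sum>u\<in>S. Y (shift t u)) = (\<Sum>u\<in>S - S0. Y u) - (\<Sum>u\<in>S' - S0. Y u)"
    using fin sub by (simp add: sum.subset_diff[of S0 S] sum.subset_diff[of S0 S'])
  hence "norm ((\<Sum>u\<in>S. Y u) - (\<Sum>u\<in>S. Y (shift t u)))
      \<le> norm (\<Sum>u\<in>S - S0. Y u) + norm (\<Sum>u\<in>S' - S0. Y u)"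
    by (simp add: norm_triangle_ineq4)
  also have "\<dots> \<le> real (card (S - S0)) * Cb + real (card (S' - S0)) * Cb"
  proof -
    have "norm (\<Sum>u\<in>T. Y u) \<le> real (card T) * Cb" if "T \<subseteq> S \<or> T \<subseteq> S'" for T
      using norm_sum[of Y T] sum_mono[of T "\<lambda>u. norm (Y u)" "\<lambda>_. Cb"] Yb that
      by (auto simp: S_def S'_def ksubsets_def subset_iff)
    thus ?thesis by (intro add_mono) auto
  qed
  also have "\<dots> \<le> real (t * ((n - 1) choose (k - 1))) * Cb + real (t * ((n - 1) choose (k - 1))) * Cb"
  proof -
    have "S - S0 \<subseteq> {u\<in>ksubsets {0..<n} k. u \<inter> {0..<t} \<noteq> {}}"
      unfolding S_def S0_def ksubsets_def by (auto simp: subset_iff disjoint_iff)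
    hence "card (S - S0) \<le> card {u\<in>ksubsets {0..<n} k. u \<inter> {0..<t} \<noteq> {}}"
      by (intro card_mono) (auto simp: finite_ksubsets)
    also have "\<dots> \<le> t * ((n - 1) choose (k - 1))"
      using card_ksubsets_meeting[of "{0..<n}" "{0..<t}" k] by simp
    finally have left: "card (S - S0) \<le> t * ((n - 1) choose (k - 1))" .
    have "S' - S0 \<subseteq> {u\<in>ksubsets {t..<n+t} k. u \<inter> {n..<n+t} \<noteq> {}}"
      unfolding S'_def S0_def ksubsets_def by (auto simp: subset_iff disjoint_iff)
    hence "card (S' - S0) \<le> card {u\<in>ksubsets {t..<n+t} k. u \<inter> {n..<n+t} \<noteq> {}}"
      by (intro card_mono) (auto simp: finite_ksubsets)
    also have "\<dots> \<le> t * ((n - 1) choose (k - 1))"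
      using card_ksubsets_meeting[of "{t..<n+t}" "{n..<n+t}" k] by simp
    finally have right: "card (S' - S0) \<le> t * ((n - 1) choose (k - 1))" .
    show ?thesis using left right Cb0 by (intro add_mono mult_right_mono) (simp_all only: of_nat_le_iff)
  qed
  finally show ?thesis unfolding S_def by (simp add: algebra_simps)
qed

text \<open>A k-set is well spread (with parameters l, m) if it lies in {l..} and its consecutive
  elements are at least m apart; then its first m translates form a plegma family.\<close>
definition well_spread :: "nat \<Rightarrow> nat \<Rightarrow> nat set \<Rightarrow> bool" where
  "well_spread l m u \<longleftrightarrow> l \<le> elt u 1 \<and> (\<forall>i\<in>{1..<card u}. elt u i + m \<le> elt u (Suc i))"

lemma not_well_spread_witness:
  assumes "finite u" "card u \<ge> 1" "\<not> well_spread l m u"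
  shows "(\<exists>a\<in>u. a < l) \<or> (\<exists>a\<in>u. \<exists>d\<in>{1..<m}. a + d \<in> u)"
proof (cases "elt u 1 < l")
  case True
  thus ?thesis using elt_in[of u 1] assms by auto
next
  case False
  then obtain i where i: "i \<in> {1..<card u}" "elt u (Suc i) < elt u i + m"
    using assms(3) by (auto simp: well_spread_def)
  have "elt u i < elt u (Suc i)" using assms i by (intro elt_less) auto
  moreover have "elt u i \<in> u" "elt u (Suc i) \<in> u" using assms i by (auto intro!: elt_in)
  ultimately show ?thesis using i(2)
    by (intro disjI2 bexI[of _ "elt u i"] bexI[of _ "elt u (Suc i) - elt u i"]) auto
qed

lemma card_not_well_spread_union_bound:
  fixes n :: nat
  assumes k: "k \<ge> 1"
  defines "K \<equiv> ksubsets {0..<n} k"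
  shows "card {u\<in>K. \<not> well_spread l m u}
      \<le> card {u\<in>K. u \<inter> {0..<l} \<noteq> {}} + (\<Sum>a\<in>{0..<n}. \<Sum>d\<in>{1..<m}. card {u\<in>K. a \<in> u \<and> a + d \<in> u})"
proof -
  define P where "P = (\<lambda>a d. {u\<in>K. a \<in> u \<and> a + d \<in> u})"
  have "{u\<in>K. \<not> well_spread l m u} \<subseteq> {u\<in>K. u \<inter> {0..<l} \<noteq> {}} \<union> (\<Union>a\<in>{0..<n}. \<Union>d\<in>{1..<m}. P a d)"
  proof
    fix u assume u: "u \<in> {u\<in>K. \<not> well_spread l m u}"
    hence "finite u" "card u = k" "u \<subseteq> {0..<n}" by (auto simp: K_def ksubsets_def)
    thus "u \<in> {u\<in>K. u \<inter> {0..<l} \<noteq> {}} \<union> (\<Union>a\<in>{0..<n}. \<Union>d\<in>{1..<m}. P a d)"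
      using not_well_spread_witness[of u l m] u k by (auto simp: P_def)
  qed
  hence "card {u\<in>K. \<not> well_spread l m u}
      \<le> card ({u\<in>K. u \<inter> {0..<l} \<noteq> {}} \<union> (\<Union>a\<in>{0..<n}. \<Union>d\<in>{1..<m}. P a d))"
    by (intro card_mono) (auto simp: K_def P_def finite_ksubsets)
  also have "\<dots> \<le> card {u\<in>K. u \<inter> {0..<l} \<noteq> {}} + card (\<Union>a\<in>{0..<n}. \<Union>d\<in>{1..<m}. P a d)"
    by (rule card_Un_le)
  also have "card (\<Union>a\<in>{0..<n}. \<Union>d\<in>{1..<m}. P a d) \<le> (\<Sum>a\<in>{0..<n}. \<Sum>d\<in>{1..<m}. card (P a d))"
    by (rule order.trans[OF card_UN_le sum_mono]) (auto intro: card_UN_le)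
  finally show ?thesis by (simp add: P_def)
qed

lemma card_not_well_spread:
  assumes k: "k \<ge> 1" and n: "n \<ge> 2"
  shows "real (card {u\<in>ksubsets {0..<n} k. \<not> well_spread l m u})
       \<le> (real l * real k / real n + real m * real k * (real k - 1) / (real n - 1)) * real (n choose k)"
proof -
  define K where "K = ksubsets {0..<n} k"
  define c where "c = real k * (real k - 1) / (real n * (real n - 1)) * real (n choose k)"
  have "real (card {u\<in>K. \<not> well_spread l m u}) \<le> real (card {u\<in>K. u \<inter> {0..<l} \<noteq> {}})
      + (\<Sum>a\<in>{0..<n}. \<Sum>d\<in>{1..<m}. real (card {u\<in>K. a \<in> u \<and> a + d \<in> u}))"
    using card_not_well_spread_union_bound[OF k, of n l m] unfolding K_def
    by (simp only: of_nat_add[symmetric] of_nat_sum[symmetric] of_nat_le_iff)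
  also have "\<dots> \<le> real l * (real k / real n * real (n choose k)) + real n * (real m * c)"
  proof (rule add_mono)
    have "card {u\<in>K. u \<inter> {0..<l} \<noteq> {}} \<le> l * ((n - 1) choose (k - 1))"
      using card_ksubsets_meeting[of "{0..<n}" "{0..<l}" k] by (simp add: K_def)
    hence "real (card {u\<in>K. u \<inter> {0..<l} \<noteq> {}}) \<le> real l * real ((n - 1) choose (k - 1))"
      by (simp only: of_nat_le_iff of_nat_mult[symmetric])
    thus "real (card {u\<in>K. u \<inter> {0..<l} \<noteq> {}}) \<le> real l * (real k / real n * real (n choose k))"
      using choose_pred_ratio[of k n] k n by simp
    have "c \<ge> 0" using k n by (simp add: c_def)
    have "(\<Sum>a\<in>{0..<n}. \<Sum>d\<in>{1..<m}. real (card {u\<in>K. a \<in> u \<and> a + d \<in> u}))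
        \<le> (\<Sum>a\<in>{0..<n}. \<Sum>d\<in>{1..<m}. c)"
      using card_ksubsets_containing_two_real[of "{0..<n}"] n
      by (intro sum_mono) (simp add: K_def c_def)
    also have "\<dots> = real n * (real (m - 1) * c)" by simp
    also have "\<dots> \<le> real n * (real m * c)"
      using \<open>c \<ge> 0\<close> by (intro mult_left_mono mult_right_mono) auto
    finally show "(\<Sum>a\<in>{0..<n}. \<Sum>d\<in>{1..<m}. real (card {u\<in>K. a \<in> u \<and> a + d \<in> u}))
        \<le> real n * (real m * c)" .
  qed
  also have "\<dots> = (real l * real k / real n + real m * real k * (real k - 1) / (real n - 1)) * real (n choose k)"
    using n by (simp add: c_def field_simps)
  finally show ?thesis unfolding K_def .
qed

lemma sum_translates_identity:
  fixes Y :: "nat set \<Rightarrow> 'a::real_vector"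
  shows "real m *\<^sub>R (\<Sum>u\<in>S. Y u)
       = (\<Sum>t<m. (\<Sum>u\<in>S. Y u) - (\<Sum>u\<in>S. Y (shift t u))) + (\<Sum>u\<in>S. \<Sum>t<m. Y (shift t u))"
  by (simp add: sum_subtractf sum.swap[of _ S] sum_constant_scaleR scaleR_sum_right)

lemma translate_defects_bound:
  fixes Y :: "nat set \<Rightarrow> 'a::real_normed_vector" and n :: nat
  assumes Yb: "\<And>u. finite u \<Longrightarrow> card u = k \<Longrightarrow> norm (Y u) \<le> Cb" and Cb0: "Cb \<ge> 0"
  defines "S \<equiv> ksubsets {0..<n} k"
  shows "norm (\<Sum>t<m. (\<Sum>u\<in>S. Y u) - (\<Sum>u\<in>S. Y (shift t u)))
       \<le> real m * (Cb * (2 * real m * real ((n - 1) choose (k - 1))))"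
proof -
  have "norm ((\<Sum>u\<in>S. Y u) - (\<Sum>u\<in>S. Y (shift t u))) \<le> Cb * (2 * real m * real ((n - 1) choose (k - 1)))"
    if "t < m" for t
  proof -
    have "norm ((\<Sum>u\<in>S. Y u) - (\<Sum>u\<in>S. Y (shift t u))) \<le> Cb * (2 * real t * real ((n - 1) choose (k - 1)))"
      unfolding S_def by (rule shift_sum_defect[where Y = Y, OF Yb Cb0])
    also have "\<dots> \<le> Cb * (2 * real m * real ((n - 1) choose (k - 1)))"
      using that Cb0 by (intro mult_left_mono mult_right_mono) auto
    finally show ?thesis .
  qed
  hence "(\<Sum>t<m. norm ((\<Sum>u\<in>S. Y u) - (\<Sum>u\<in>S. Y (shift t u))))
      \<le> (\<Sum>t<m. Cb * (2 * real m * real ((n - 1) choose (k - 1))))"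
    by (intro sum_mono) simp
  also have "\<dots> = real m * (Cb * (2 * real m * real ((n - 1) choose (k - 1))))" by simp
  finally show ?thesis by (rule order.trans[OF norm_sum])
qed

text \<open>Summing the translate-averages over all k-subsets of {0..<n}: each well-spread k-set
  contributes at most m B, each of the others at most m Cb.\<close>
lemma translate_averages_bound:
  fixes Y :: "nat set \<Rightarrow> 'a::real_normed_vector" and n :: nat
  assumes Yb: "\<And>u. finite u \<Longrightarrow> card u = k \<Longrightarrow> norm (Y u) \<le> Cb" and B0: "B \<ge> 0"
    and good: "\<And>u. finite u \<Longrightarrow> card u = k \<Longrightarrow> well_spread l m u \<Longrightarrow>
       norm (\<Sum>t<m. Y (shift t u)) \<le> real m * B"
  defines "S \<equiv> ksubsets {0..<n} k"
  shows "norm (\<Sum>u\<in>S. \<Sum>t<m. Y (shift t u))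
       \<le> real m * B * real (n choose k) + real m * Cb * real (card {u\<in>S. \<not> well_spread l m u})"
proof -
  define Bad where "Bad = {u\<in>S. \<not> well_spread l m u}"
  have "norm (\<Sum>t<m. Y (shift t u)) \<le> real m * B + (if u \<in> Bad then real m * Cb else 0)"
    if u: "u \<in> S" for u
  proof -
    have fu: "finite u" "card u = k" using u by (auto simp: S_def ksubsets_def)
    have "norm (\<Sum>t<m. Y (shift t u)) \<le> (\<Sum>t<m. norm (Y (shift t u)))" by (rule norm_sum)
    also have "\<dots> \<le> (\<Sum>t<m. Cb)" using fu by (intro sum_mono Yb) (auto simp: card_image inj_on_def)
    finally have "norm (\<Sum>t<m. Y (shift t u)) \<le> real m * Cb" by simp
    thus ?thesis using good[OF fu] u B0 by (auto simp: Bad_def add_increasing)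
  qed
  hence "norm (\<Sum>u\<in>S. \<Sum>t<m. Y (shift t u)) \<le> (\<Sum>u\<in>S. real m * B + (if u \<in> Bad then real m * Cb else 0))"
    by (intro order.trans[OF norm_sum sum_mono])
  also have "\<dots> = real m * B * real (n choose k) + real m * Cb * real (card Bad)"
    by (simp add: sum.distrib sum.If_cases Bad_def Int_def S_def card_ksubsets finite_ksubsets)
  finally show ?thesis unfolding Bad_def .
qed

lemma ksubset_average_estimate:
  fixes Y :: "nat set \<Rightarrow> 'a::real_normed_vector"
  assumes Yb: "\<And>u. finite u \<Longrightarrow> card u = k \<Longrightarrow> norm (Y u) \<le> Cb" and Cb0: "Cb \<ge> 0"
    and k: "k \<ge> 1" and m: "m \<ge> 1" and n: "n \<ge> 2" and B0: "B \<ge> 0"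
    and good: "\<And>u. finite u \<Longrightarrow> card u = k \<Longrightarrow> well_spread l m u \<Longrightarrow>
       norm (\<Sum>t<m. Y (shift t u)) \<le> real m * B"
  shows "norm (\<Sum>u\<in>ksubsets {0..<n} k. Y u) \<le> (B + Cb * (real l * real k / real n
     + real m * real k * (real k - 1) / (real n - 1) + 2 * real m * real k / real n)) * real (n choose k)"
proof -
  define S where "S = ksubsets {0..<n} k"
  define N where "N = real (n choose k)"
  define D where "D = Cb * (2 * real m * (real k / real n * N))"
  define bad where "bad = real (card {u\<in>S. \<not> well_spread l m u})"
  have N_pred: "real ((n - 1) choose (k - 1)) = real k / real n * N"
    using choose_pred_ratio[of k n] k n by (simp add: N_def)
  have "norm (\<Sum>t<m. (\<Sum>u\<in>S. Y u) - (\<Sum>u\<in>S. Y (shift t u)))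
      \<le> real m * (Cb * (2 * real m * real ((n - 1) choose (k - 1))))"
    unfolding S_def by (rule translate_defects_bound[OF Yb Cb0])
  hence defects: "norm (\<Sum>t<m. (\<Sum>u\<in>S. Y u) - (\<Sum>u\<in>S. Y (shift t u))) \<le> real m * D"
    by (simp only: N_pred D_def)
  have "real m * norm (\<Sum>u\<in>S. Y u) = norm (real m *\<^sub>R (\<Sum>u\<in>S. Y u))" by simp
  also have "\<dots> \<le> norm (\<Sum>t<m. (\<Sum>u\<in>S. Y u) - (\<Sum>u\<in>S. Y (shift t u))) + norm (\<Sum>u\<in>S. \<Sum>t<m. Y (shift t u))"
    unfolding sum_translates_identity by (rule norm_triangle_ineq)
  also have "\<dots> \<le> real m * D + (real m * B * N + real m * Cb * bad)"
    using defects translate_averages_bound[where n = n, OF Yb B0 good] unfolding S_def N_def bad_def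
    by (rule add_mono)
  also have "\<dots> = real m * (D + B * N + Cb * bad)" by (simp add: algebra_simps)
  finally have "norm (\<Sum>u\<in>S. Y u) \<le> D + B * N + Cb * bad" using m by simp
  also have "\<dots> \<le> D + B * N + Cb * ((real l * real k / real n + real m * real k * (real k - 1) / (real n - 1)) * N)"
    using card_not_well_spread[OF k n, of l m] Cb0 by (simp add: bad_def S_def N_def mult_left_mono)
  finally show ?thesis using n by (simp add: S_def N_def D_def field_simps)
qed

lemma ksubset_averages_tendsto_zero:
  fixes Y :: "nat set \<Rightarrow> 'a::real_normed_vector"
  assumes k: "k \<ge> 1"
    and Yb: "\<And>u. finite u \<Longrightarrow> card u = k \<Longrightarrow> norm (Y u) \<le> Cb"
    and small: "\<And>r. r > 0 \<Longrightarrow> \<exists>m\<ge>1. \<exists>l. \<forall>u. finite u \<longrightarrow> card u = k \<longrightarrow> well_spread l m u \<longrightarrow>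
                   norm (\<Sum>t<m. Y (shift t u)) \<le> real m * r"
  shows "(\<lambda>n. (1 / real (n choose k)) *\<^sub>R (\<Sum>u\<in>ksubsets {0..<n} k. Y u)) \<longlonglongrightarrow> 0"
  unfolding LIMSEQ_iff
proof (intro allI impI)
  fix r :: real assume r: "r > 0"
  have "norm (Y {0..<k}) \<le> Cb" by (rule Yb) simp_all
  hence Cb0: "Cb \<ge> 0" by (rule order.trans[OF norm_ge_zero])
  obtain m l where m: "m \<ge> 1" and good: "\<And>u. finite u \<Longrightarrow> card u = k \<Longrightarrow> well_spread l m u \<Longrightarrow>
      norm (\<Sum>t<m. Y (shift t u)) \<le> real m * (r / 2)"
    using small[of "r / 2"] r by auto
  define e where "e = (\<lambda>n::nat. Cb * (real l * real k / real n
      + real m * real k * (real k - 1) / (real n - 1) + 2 * real m * real k / real n))"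
  have "e \<longlonglongrightarrow> 0" unfolding e_def by real_asymp
  then obtain N where N: "\<And>n. n \<ge> N \<Longrightarrow> norm (e n - 0) < r / 2"
    using LIMSEQ_D[of e 0 "r / 2"] r by auto
  show "\<exists>no. \<forall>n\<ge>no. norm ((1 / real (n choose k)) *\<^sub>R (\<Sum>u\<in>ksubsets {0..<n} k. Y u) - 0) < r"
  proof (intro exI allI impI)
    fix n assume n: "n \<ge> max N 2"
    have est: "norm (\<Sum>u\<in>ksubsets {0..<n} k. Y u) \<le> (r / 2 + e n) * real (n choose k)"
      unfolding e_def by (rule ksubset_average_estimate[OF Yb Cb0 k m _ _ good]) (use n r in auto)
    show "norm ((1 / real (n choose k)) *\<^sub>R (\<Sum>u\<in>ksubsets {0..<n} k. Y u) - 0) < r"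
    proof (cases "n choose k = 0")
      case True
      show ?thesis using r by (simp add: True)
    next
      case False
      have "norm ((1 / real (n choose k)) *\<^sub>R (\<Sum>u\<in>ksubsets {0..<n} k. Y u) - 0)
          = norm (\<Sum>u\<in>ksubsets {0..<n} k. Y u) / real (n choose k)" by simp
      also have "\<dots> \<le> r / 2 + e n" using est False by (simp add: pos_divide_le_eq)
      also have "\<dots> < r" using N[of n] n by (simp add: abs_less_iff)
      finally show ?thesis .
    qed
  qed
qed

text \<open>The p-th element of a subset is at least the p-th element of the whole set; this places
  the plegma families built from L beyond M(l).\<close>
lemma enumerate_subset_le:
  fixes L M :: "nat set"
  assumes "L \<subseteq> M" "infinite L"
  shows "enumerate M p \<le> enumerate L p"
proof (induction p)
  case 0
  show ?case using assms enumerate_in_set[of L 0] by (auto simp: enumerate_0 Least_le)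
next
  case (Suc p)
  have "enumerate M p < enumerate L (Suc p)"
    using Suc enumerate_step[OF assms(2), of p] by linarith
  thus ?case using assms enumerate_in_set[of L "Suc p"]
    by (auto simp: enumerate_Suc'' Least_le infinite_super)
qed

lemma sum_ksubsets_restr:
  assumes "infinite L"
  shows "(\<Sum>s\<in>ksubsets (restr L n) k. x s) = (\<Sum>u\<in>ksubsets {0..<n} k. x (enumerate L ` u))"
proof -
  have inj: "inj (enumerate L)" using strict_mono_enumerate[OF assms] by (rule strict_mono_imp_inj_on)
  have "(\<lambda>i. i - 1) ` {1..n} = {0..<n}"
    by (auto simp: image_iff intro!: bexI[of _ "Suc _"])
  hence "restr L n = enumerate L ` {0..<n}"
    unfolding restr_def nth_el_def by (metis image_image)
  hence "ksubsets (restr L n) k = image (enumerate L) ` ksubsets {0..<n} k"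
    using inj by (simp add: ksubsets_image inj_on_subset)
  thus ?thesis by (simp add: sum.reindex inj_on_image inj_on_subset[OF inj])
qed

section \<open>Consequences of the spreading model\<close>

text \<open>The images under a strictly increasing f of the first m translates of a well-spread
  k-set form a plegma family: translation increases every coordinate, and the last translate
  of the i-th element stays below the (i+1)-th element of the first one.\<close>
lemma translates_plegma:
  fixes f :: "nat \<Rightarrow> nat"
  assumes f: "strict_mono f" and u: "finite u" "card u = k" "well_spread l m u" and m: "1 \<le> m"
  shows "plegma k (\<lambda>j. (\<lambda>a. f (a + (j - 1))) ` u) m"
proof -
  define ss where "ss = (\<lambda>j. (\<lambda>a. f (a + (j - 1))) ` u)"
  have elts: "elt (ss j) i = f (elt u i + (j - 1))" if "1 \<le> i" "i \<le> k" for i j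
  proof -
    have "strict_mono (\<lambda>a. f (a + (j - 1)))" using f by (simp add: strict_mono_def)
    thus ?thesis using that u unfolding ss_def by (subst elt_strict_mono_image) auto
  qed
  have "plegma k ss m"
    unfolding plegma_def
  proof (intro conjI ballI)
    fix i j assume "i \<in> {1..k}" "j \<in> {1..<m}"
    thus "elt (ss j) i < elt (ss (Suc j)) i"
      using f elts[of i j] elts[of i "Suc j"] by (simp add: strict_mono_less)
  next
    fix i assume i: "i \<in> {1..<k}"
    hence "elt u i + m \<le> elt u (Suc i)" using u by (auto simp: well_spread_def)
    thus "elt (ss m) i < elt (ss 1) (Suc i)"
      using i m f elts[of i m] elts[of "Suc i" 1] by (simp add: strict_mono_less)
  qed
  thus ?thesis unfolding ss_def .
qed

text \<open>If (x_s)_{s \<in> [M]^k} generates a k-spreading model with seminorm nrm, then along any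
  infinite L \<subseteq> M the average of x over the images of the m translates of a well-spread k-set
  has norm at most \<parallel>(e_1+...+e_m)/m\<parallel>_* + \<delta>_l: these images form a plegma family in [M]^k
  starting beyond M(l).\<close>
lemma spreading_model_translates_bound:
  fixes x :: "nat set \<Rightarrow> 'a::real_normed_vector"
  assumes gen: "generates_spreading_model x M k nrm" and k: "k \<ge> 1"
    and L: "L \<subseteq> M" "infinite L"
  obtains \<delta> :: "nat \<Rightarrow> real" where "\<delta> \<longlonglongrightarrow> 0" and
    "\<And>l m u. 1 \<le> m \<Longrightarrow> m \<le> l \<Longrightarrow> finite u \<Longrightarrow> card u = k \<Longrightarrow> well_spread l m u \<Longrightarrow>
       norm (\<Sum>t<m. x (enumerate L ` shift t u)) \<le> real m * (\<bar>nrm (sm_coeffs m (\<lambda>i. 1 / real m))\<bar> + \<delta> l)"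
proof -
  define f where "f = enumerate L"
  have f: "strict_mono f" unfolding f_def using L(2) by (rule strict_mono_enumerate)
  obtain \<delta> :: "nat \<Rightarrow> real" where \<delta>: "\<delta> \<longlonglongrightarrow> 0" and
    SM: "\<And>l m ss a. 1 \<le> m \<Longrightarrow> m \<le> l \<Longrightarrow> (\<forall>j\<in>{1..m}. ss j \<in> ksubsets M k) \<Longrightarrow> plegma k ss m \<Longrightarrow>
          elt (ss 1) 1 \<ge> nth_el M l \<Longrightarrow> (\<forall>j\<in>{1..m}. \<bar>a j\<bar> \<le> 1) \<Longrightarrow>
          \<bar>norm (\<Sum>j=1..m. a j *\<^sub>R x (ss j)) - nrm (sm_coeffs m a)\<bar> \<le> \<delta> l"
    using gen unfolding generates_spreading_model_def by blast
  have "norm (\<Sum>t<m. x (f ` shift t u)) \<le> real m * (\<bar>nrm (sm_coeffs m (\<lambda>i. 1 / real m))\<bar> + \<delta> l)"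
    if m: "1 \<le> m" "m \<le> l" and u: "finite u" "card u = k" "well_spread l m u" for l m u
  proof -
    define \<nu> where "\<nu> = nrm (sm_coeffs m (\<lambda>i. 1 / real m))"
    define ss where "ss = (\<lambda>j. (\<lambda>a. f (a + (j - 1))) ` u)"
    have inM: "ss j \<in> ksubsets M k" for j
    proof -
      have "strict_mono (\<lambda>a. f (a + (j - 1)))" using f by (simp add: strict_mono_def)
      hence "card (ss j) = k" using u by (simp add: ss_def card_image strict_mono_imp_inj_on)
      moreover have "ss j \<subseteq> M" using L enumerate_in_set[OF L(2)] by (auto simp: ss_def f_def)
      ultimately show ?thesis using u by (simp add: ksubsets_def ss_def)
    qed
    have start: "nth_el M l \<le> elt (ss 1) 1"
    proof -
      have "nth_el M l \<le> f (l - 1)"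
        using enumerate_subset_le[OF L] by (simp add: nth_el_def f_def)
      also have "\<dots> \<le> f (elt u 1)"
        using u(3) f unfolding well_spread_def by (simp add: strict_mono_less_eq le_diff_conv)
      also have "\<dots> = elt (ss 1) 1" using f u k by (simp add: ss_def elt_strict_mono_image)
      finally show ?thesis .
    qed
    have plegma: "plegma k ss m" unfolding ss_def by (rule translates_plegma[OF f u m(1)])
    have "\<bar>norm (\<Sum>j=1..m. (1 / real m) *\<^sub>R x (ss j)) - \<nu>\<bar> \<le> \<delta> l"
      unfolding \<nu>_def
      by (rule SM[where ss = ss and a = "\<lambda>_. 1 / real m", OF m _ plegma start]) (use inM m in auto)
    moreover have "(\<Sum>j=1..m. (1 / real m) *\<^sub>R x (ss j)) = (1 / real m) *\<^sub>R (\<Sum>t<m. x (f ` shift t u))"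
      by (simp add: sum.atLeast1_atMost_eq scaleR_sum_right ss_def image_image)
    ultimately have "\<bar>norm (\<Sum>t<m. x (f ` shift t u)) / real m - \<nu>\<bar> \<le> \<delta> l" by simp
    hence "norm (\<Sum>t<m. x (f ` shift t u)) / real m \<le> \<bar>\<nu>\<bar> + \<delta> l"
      using abs_ge_self[of \<nu>] unfolding abs_le_iff by linarith
    thus ?thesis using m by (simp add: pos_divide_le_eq mult.commute \<nu>_def)
  qed
  thus ?thesis using that \<delta> unfolding f_def by blast
qed

lemma cesaro_null_spreading_model_small_translates:
  fixes x :: "nat set \<Rightarrow> 'a::real_normed_vector"
  assumes gen: "generates_spreading_model x M k nrm" and k: "k \<ge> 1"
    and L: "L \<subseteq> M" "infinite L"
    and cesaro: "(\<lambda>n. nrm (sm_coeffs n (\<lambda>i. 1 / real n))) \<longlonglongrightarrow> 0"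
    and r: "r > 0"
  shows "\<exists>m\<ge>1. \<exists>l. \<forall>u. finite u \<longrightarrow> card u = k \<longrightarrow> well_spread l m u \<longrightarrow>
           norm (\<Sum>t<m. x (enumerate L ` shift t u)) \<le> real m * r"
proof -
  obtain \<delta> where \<delta>: "\<delta> \<longlonglongrightarrow> 0" and bound: "\<And>l m u. 1 \<le> m \<Longrightarrow> m \<le> l \<Longrightarrow> finite u \<Longrightarrow> card u = k \<Longrightarrow>
      well_spread l m u \<Longrightarrow>
      norm (\<Sum>t<m. x (enumerate L ` shift t u)) \<le> real m * (\<bar>nrm (sm_coeffs m (\<lambda>i. 1 / real m))\<bar> + \<delta> l)"
    using spreading_model_translates_bound[OF gen k L] by blast
  obtain m0 where m0: "\<And>m. m \<ge> m0 \<Longrightarrow> norm (nrm (sm_coeffs m (\<lambda>i. 1 / real m)) - 0) < r / 2"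
    using LIMSEQ_D[OF cesaro, of "r / 2"] r by auto
  obtain l0 where l0: "\<And>l. l \<ge> l0 \<Longrightarrow> norm (\<delta> l - 0) < r / 2"
    using LIMSEQ_D[OF \<delta>, of "r / 2"] r by auto
  define m where "m = max m0 1"
  define l where "l = max l0 m"
  have m: "m \<ge> 1" "\<bar>nrm (sm_coeffs m (\<lambda>i. 1 / real m))\<bar> < r / 2" using m0[of m] by (auto simp: m_def)
  have l: "l \<ge> m" "\<delta> l < r / 2" using l0[of l] by (auto simp: l_def)
  have "norm (\<Sum>t<m. x (enumerate L ` shift t u)) \<le> real m * r"
    if "finite u" "card u = k" "well_spread l m u" for u
  proof -
    have "\<bar>nrm (sm_coeffs m (\<lambda>i. 1 / real m))\<bar> + \<delta> l \<le> r" using m l by linarith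
    thus ?thesis using bound[OF m(1) l(1) that] by (meson mult_left_mono of_nat_0_le_iff order.trans)
  qed
  thus ?thesis using m(1) by blast
qed

theorem mainTheorem14:
  fixes x :: "nat set \<Rightarrow> 'a::banach" and k :: nat and M :: "nat set"
    and nrm :: "(nat \<Rightarrow> real) \<Rightarrow> real"
  assumes "k \<ge> 1"
    and "bounded (x ` ksubsets UNIV k)"
    and "infinite M"
    and "is_seminorm_on_coeffs nrm"
    and "generates_spreading_model x M k nrm"
    and "(\<lambda>n. nrm (sm_coeffs n (\<lambda>i. 1 / real n))) \<longlonglongrightarrow> 0"
  shows "\<forall>L. L \<subseteq> M \<and> infinite L \<longrightarrow> k_cesaro_summable x L k 0"
proof (intro allI impI)
  fix L assume L: "L \<subseteq> M \<and> infinite L"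
  obtain Cb where Cb: "\<And>s. s \<in> ksubsets UNIV k \<Longrightarrow> norm (x s) \<le> Cb"
    using assms(2) by (auto simp: bounded_iff)
  have inj: "inj (enumerate L)" using L by (simp add: strict_mono_enumerate strict_mono_imp_inj_on)
  have "norm (x (enumerate L ` u)) \<le> Cb" if "finite u" "card u = k" for u
    using Cb that card_image[OF inj_on_subset[OF inj, of u]] by (simp add: ksubsets_def)
  from ksubset_averages_tendsto_zero[OF assms(1) this
      cesaro_null_spreading_model_small_translates[OF assms(5,1) _ _ assms(6)]]
  show "k_cesaro_summable x L k 0"
    using L by (simp add: k_cesaro_summable_def sum_ksubsets_restr)
qed

end
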